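(* Let $A\in\mathcal C$, let $U$ be an independent subset of $A$ and $V$ an independent subset of $T$, and let $f:{\rm desc}(U)\to{\rm desc}(V)$ be an isomorphism. Let $Q$ be the set of $q$-element subsets $p\subseteq U$ such that $p$ has a common predecessor in $A$ and $f(p)$ has a common predecessor in $T$. For $p\in Q$ let $w_p$ be a common predecessor of $p$ in $A$ and $w_{f(p)}$ a common predecessor of $f(p)$ in $T$. Put $U'=(U\setminus\bigcup Q)\cup\{w_p: p\in Q\}$ and $V'=(V\setminus\bigcup_{p\in Q}f(p))\cup\{w_{f(p)}:p\in Q\}$. Then: (a) $U'$ and $V'$ are independent subsets of $A$ and $T$ respectively, and the extension $F$ of $f$ which maps $w_p$ to $w_{f(p)}$ for each $p\in Q$ is an isomorphism from ${\rm desc}(U')$ to ${\rm desc}(V')$; (b) if $I\subseteq A$ is disjoint from $U$ and $U\cup I$ is an independent subset of $A$, then $U'\cup I$ is also independent.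
   Context: Fix an integer $q\ge2$; $T=T_q$ is the digraph whose vertices are finite sequences over $\{0,\ldots,q-1\}$ with edges $(\bar w,\bar wi)$. For a digraph, an $s$-arc ($s\ge0$) from $u_0$ to $u_s$ is a sequence $u_0\ldots u_s$ with each $(u_i,u_{i+1})$ an edge and $u_{i-1}\ne u_{i+1}$ for $0<i<s$; ${\rm desc}(u)$ is the set of vertices reachable from $u$ by some $s$-arc, $s\ge0$ (including $u$), and ${\rm desc}(Y)=\bigcup_{y\in Y}{\rm desc}(y)$; descendant sets are considered as induced subdigraphs. A descendant-closed set $B$ is finitely generated if $B={\rm desc}(Z)$ for a finite $Z$. A subset is independent if the descendant sets of any two distinct members are disjoint. A common predecessor of a set $X$ of vertices is a vertex $a$ with $(a,x)$ an edge for all $x\in X$. $\mathcal C$ is the class of digraphs $A$ such that ${\rm desc}(a)\cong T$ for every $a\in A$, $A={\rm desc}(Z)$ for some finite $Z$, and ${\rm desc}(a)\cap{\rm desc}(b)$ is finitely generated for all $a,b\in A$. *)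

theory Defs
  imports Main
begin

definition T_verts :: "nat \<Rightarrow> nat list set" where
  "T_verts q = {w. set w \<subseteq> {0..<q}}"

definition T_edges :: "nat \<Rightarrow> (nat list \<times> nat list) set" where
  "T_edges q = {(w, w @ [i]) | w i. w \<in> T_verts q \<and> i < q}"

definition is_arc :: "('a \<times> 'a) set \<Rightarrow> 'a list \<Rightarrow> bool" where
  "is_arc E us \<longleftrightarrow> us \<noteq> [] \<and>
     (\<forall>i. Suc i < length us \<longrightarrow> (us ! i, us ! Suc i) \<in> E) \<and>
     (\<forall>i. i + 2 < length us \<longrightarrow> us ! i \<noteq> us ! (i + 2))"

definition desc :: "('a \<times> 'a) set \<Rightarrow> 'a \<Rightarrow> 'a set" where
  "desc E u = {v. \<exists>us. is_arc E us \<and> hd us = u \<and> last us = v}"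

definition descs :: "('a \<times> 'a) set \<Rightarrow> 'a set \<Rightarrow> 'a set" where
  "descs E Y = (\<Union>y\<in>Y. desc E y)"

definition fin_gen :: "('a \<times> 'a) set \<Rightarrow> 'a set \<Rightarrow> bool" where
  "fin_gen E B \<longleftrightarrow> (\<exists>Z. finite Z \<and> B = descs E Z)"

definition dg_iso :: "('a \<times> 'a) set \<Rightarrow> 'a set \<Rightarrow> ('b \<times> 'b) set \<Rightarrow> 'b set \<Rightarrow> ('a \<Rightarrow> 'b) \<Rightarrow> bool" where
  "dg_iso E X E' Y f \<longleftrightarrow> bij_betw f X Y \<and>
     (\<forall>x\<in>X. \<forall>y\<in>X. (x, y) \<in> E \<longleftrightarrow> (f x, f y) \<in> E')"

definition independent :: "'a set \<Rightarrow> ('a \<times> 'a) set \<Rightarrow> 'a set \<Rightarrow> bool" where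
  "independent Vs E U \<longleftrightarrow> U \<subseteq> Vs \<and>
     (\<forall>x\<in>U. \<forall>y\<in>U. x \<noteq> y \<longrightarrow> desc E x \<inter> desc E y = {})"

definition common_pred :: "('a \<times> 'a) set \<Rightarrow> 'a set \<Rightarrow> 'a \<Rightarrow> bool" where
  "common_pred E X a \<longleftrightarrow> (\<forall>x\<in>X. (a, x) \<in> E)"

definition in_C :: "nat \<Rightarrow> 'a set \<Rightarrow> ('a \<times> 'a) set \<Rightarrow> bool" where
  "in_C q A E \<longleftrightarrow> E \<subseteq> A \<times> A \<and>
     (\<forall>a\<in>A. \<exists>g :: 'a \<Rightarrow> nat list. dg_iso E (desc E a) (T_edges q) (T_verts q) g) \<and>
     (\<exists>Z. finite Z \<and> Z \<subseteq> A \<and> A = descs E Z) \<and>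
     (\<forall>a\<in>A. \<forall>b\<in>A. fin_gen E (desc E a \<inter> desc E b))"

end

theory Submission
  imports Defs
begin

text \<open>In T and in every member of C the descendant sets are the reachability sets of an acyclic
  digraph. A member p of Q has q elements below a vertex with at most q children, so p is exactly
  the set of children of w p, and likewise f(p) is the set of children of wT p; since parents in T
  are unique, distinct members of Q are disjoint. Replacing the children by their parent keeps an
  independent set independent: a common descendant of two new elements can be pushed down to a
  common descendant of two distinct old ones. The new parents lie outside the old descendant
  sets, and f maps the children of w p onto those of wT p, so sending w p to wT p extends f to an
  isomorphism.\<close>

section \<open>Descendants as reachability\<close>

lemma is_arc_rtrancl:
  assumes "is_arc E us"
  shows "(hd us, last us) \<in> E\<^sup>*"
proof -
  have "(hd us, us ! k) \<in> E\<^sup>*" if "k < length us" for k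
    using that
  proof (induction k)
    case 0
    then show ?case by (simp add: hd_conv_nth)
  next
    case (Suc k)
    then have "(us ! k, us ! Suc k) \<in> E" using assms by (simp add: is_arc_def)
    with Suc show ?case by (meson Suc_lessD rtrancl.rtrancl_into_rtrancl)
  qed
  moreover have "us \<noteq> []" using assms by (simp add: is_arc_def)
  ultimately show ?thesis by (simp add: last_conv_nth)
qed

lemma is_arc_snoc:
  assumes "asym E" "is_arc E us" "(last us, z) \<in> E"
  shows "is_arc E (us @ [z])"
  unfolding is_arc_def
proof (intro conjI allI impI)
  fix i assume i: "Suc i < length (us @ [z])"
  show "((us @ [z]) ! i, (us @ [z]) ! Suc i) \<in> E"
  proof (cases "Suc i < length us")
    case True
    then show ?thesis using assms(2) by (simp add: is_arc_def nth_append)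
  next
    case False
    then have "i = length us - 1" using i by simp
    with i assms(2,3) show ?thesis by (simp add: nth_append is_arc_def last_conv_nth)
  qed
next
  fix i assume i: "i + 2 < length (us @ [z])"
  show "(us @ [z]) ! i \<noteq> (us @ [z]) ! (i + 2)"
  proof (cases "i + 2 < length us")
    case True
    then show ?thesis using assms(2) by (simp add: is_arc_def nth_append)
  next
    case False
    then have len: "length us = i + 2" using i by simp
    then have "(us ! i, last us) \<in> E"
      using assms(2) by (simp add: is_arc_def last_conv_nth numeral_2_eq_2)
    then have "us ! i \<noteq> z" using assms(1,3) by (auto dest: asymD)
    then show ?thesis using len by (simp add: nth_append)
  qed
qed simp

text \<open>Without 2-cycles every walk is an arc.\<close>
lemma desc_eq_rtrancl:
  assumes "asym E"
  shows "desc E u = E\<^sup>* `` {u}"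
proof
  show "desc E u \<subseteq> E\<^sup>* `` {u}"
    using is_arc_rtrancl by (fastforce simp: desc_def)
next
  have "\<exists>us. is_arc E us \<and> hd us = u \<and> last us = v" if "(u, v) \<in> E\<^sup>*" for v
    using that
  proof (induction rule: rtrancl_induct)
    case base
    show ?case by (rule exI[of _ "[u]"]) (simp add: is_arc_def)
  next
    case (step y z)
    then obtain us where "is_arc E us" "hd us = u" "last us = y" by blast
    with step(2) show ?case
      using is_arc_snoc[OF assms] by (intro exI[of _ "us @ [z]"]) (auto simp: is_arc_def)
  qed
  then show "E\<^sup>* `` {u} \<subseteq> desc E u" by (auto simp: desc_def)
qed

lemma descs_eq_rtrancl: "asym E \<Longrightarrow> descs E U = E\<^sup>* `` U"
  by (auto simp: descs_def desc_eq_rtrancl)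

lemma descs_successor_closed: "asym E \<Longrightarrow> E `` descs E U \<subseteq> descs E U"
  by (auto simp: descs_eq_rtrancl intro: rtrancl_into_rtrancl)

section \<open>The tree T and the class C\<close>

lemma trancl_rank_less:
  fixes h :: "'a \<Rightarrow> 'b::order"
  assumes "(a, b) \<in> r\<^sup>+" "a \<in> D"
    and "\<And>x y. x \<in> D \<Longrightarrow> (x, y) \<in> r \<Longrightarrow> y \<in> D \<and> h x < h y"
  shows "h a < h b"
proof -
  have "b \<in> D \<and> h a < h b"
    using assms(1) by induction (use assms(2,3) in \<open>auto intro: less_trans\<close>)
  then show ?thesis ..
qed

lemma asym_if_acyclic: "acyclic r \<Longrightarrow> asym r"
  by (rule asymI) (meson acyclic_def r_into_trancl trancl_into_trancl)

lemma T_edges_iff: "(x, y) \<in> T_edges q \<longleftrightarrow> x \<in> T_verts q \<and> (\<exists>i<q. y = x @ [i])"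
  by (auto simp: T_edges_def)

lemma acyclic_T_edges: "acyclic (T_edges q)"
proof (rule acyclicI, intro allI notI)
  fix x assume "(x, x) \<in> (T_edges q)\<^sup>+"
  then have "length x < length x"
    by (rule trancl_rank_less[where D = UNIV]) (auto simp: T_edges_iff)
  then show False by simp
qed

lemma T_edges_Image: "b \<in> T_verts q \<Longrightarrow> T_edges q `` {b} = (\<lambda>i. b @ [i]) ` {..<q}"
  by (auto simp: T_edges_iff)

lemma card_T_edges_Image: "b \<in> T_verts q \<Longrightarrow> card (T_edges q `` {b}) = q"
  by (simp add: T_edges_Image card_image inj_on_def)

lemma T_edges_parent_unique: "(b, v) \<in> T_edges q \<Longrightarrow> (b', v) \<in> T_edges q \<Longrightarrow> b = b'"
  by (auto simp: T_edges_iff)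

lemma T_edges_Image_eq_if_card:
  assumes "b \<in> T_verts q" "common_pred (T_edges q) X b" "card X = q"
  shows "T_edges q `` {b} = X"
proof -
  have "X \<subseteq> T_edges q `` {b}" using assms(2) by (auto simp: common_pred_def)
  moreover have "finite (T_edges q `` {b})" using assms(1) by (simp add: T_edges_Image)
  ultimately show ?thesis
    using assms(1,3) card_seteq by (metis card_T_edges_Image order_refl)
qed

lemma asym_if_in_C:
  assumes "in_C q A E"
  shows "asym E"
proof (rule asymI, rule notI)
  fix x y assume xy: "(x, y) \<in> E" and yx: "(y, x) \<in> E"
  then have "x \<in> A" using assms by (auto simp: in_C_def)
  then obtain g :: "_ \<Rightarrow> nat list" where g: "dg_iso E (desc E x) (T_edges q) (T_verts q) g"
    using assms unfolding in_C_def by blast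
  have "x \<in> desc E x"
    unfolding desc_def by (rule CollectI, rule exI[of _ "[x]"]) (simp add: is_arc_def)
  moreover have "y \<in> desc E x"
    unfolding desc_def
    by (rule CollectI, rule exI[of _ "[x, y]"]) (simp add: is_arc_def xy nth_Cons split: nat.splits)
  ultimately have "(g x, g y) \<in> T_edges q" "(g y, g x) \<in> T_edges q"
    using g xy yx unfolding dg_iso_def by blast+
  then show False using asym_if_acyclic[OF acyclic_T_edges] by (auto dest: asymD)
qed

text \<open>A cycle through x lies in desc x, where the tree isomorphism makes the word length
  strictly increase along edges.\<close>
lemma acyclic_if_in_C:
  assumes "in_C q A E"
  shows "acyclic E"
proof (rule acyclicI, intro allI notI)
  fix x assume cycle: "(x, x) \<in> E\<^sup>+"
  then obtain y where "(x, y) \<in> E" by (meson tranclD)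
  then have "x \<in> A" using assms by (auto simp: in_C_def)
  then obtain g :: "_ \<Rightarrow> nat list" where g: "dg_iso E (desc E x) (T_edges q) (T_verts q) g"
    using assms unfolding in_C_def by blast
  have desc: "desc E x = E\<^sup>* `` {x}"
    using desc_eq_rtrancl[OF asym_if_in_C[OF assms]] .
  have "length (g x) < length (g x)"
  proof (rule trancl_rank_less[OF cycle, where D = "desc E x"])
    show "x \<in> desc E x" by (simp add: desc)
  next
    fix a b assume "a \<in> desc E x" "(a, b) \<in> E"
    moreover from this have "b \<in> desc E x" by (auto simp: desc intro: rtrancl_into_rtrancl)
    ultimately show "b \<in> desc E x \<and> length (g a) < length (g b)"
      using g by (auto simp: dg_iso_def T_edges_iff)
  qed
  then show False by simp
qed

lemma in_C_Image_eq_if_card: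
  assumes AC: "in_C q A E" and "a \<in> A" "common_pred E p a" "card p = q"
  shows "E `` {a} = p"
proof -
  obtain g :: "_ \<Rightarrow> nat list" where g: "dg_iso E (desc E a) (T_edges q) (T_verts q) g"
    using assms unfolding in_C_def by blast
  have sub: "E `` {a} \<subseteq> desc E a" "a \<in> desc E a"
    using desc_eq_rtrancl[OF asym_if_in_C[OF AC]] by auto
  then have inj: "inj_on g (E `` {a})"
    using g unfolding dg_iso_def bij_betw_def by (meson inj_on_subset)
  have "g ` (E `` {a}) \<subseteq> T_edges q `` {g a}"
    using g sub unfolding dg_iso_def by blast
  moreover have "g a \<in> T_verts q"
    using g sub(2) by (auto simp: dg_iso_def bij_betw_def)
  ultimately have "finite (E `` {a}) \<and> card (E `` {a}) \<le> q"
    using inj card_T_edges_Image card_mono T_edges_Image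
    by (metis card_image finite_imageD finite_imageI finite_lessThan finite_subset)
  then show ?thesis
    using assms card_seteq[of "E `` {a}" p] by (auto simp: common_pred_def)
qed

section \<open>Independent sets in acyclic digraphs\<close>

lemma independent_rtrancl_disjoint:
  assumes "asym E" "independent Vs E U" "x \<in> U" "y \<in> U" "(x, z) \<in> E\<^sup>*" "(y, z) \<in> E\<^sup>*"
  shows "x = y"
  using assms by (auto simp: independent_def desc_eq_rtrancl)

text \<open>Otherwise a would descend from u, closing a cycle, or from a second member of U.\<close>
lemma independent_trancl_notin_descs:
  assumes "acyclic E" "independent Vs E U" "u \<in> U" "(a, u) \<in> E\<^sup>+"
  shows "a \<notin> descs E U"
proof
  assume "a \<in> descs E U"
  then obtain v where v: "v \<in> U" "(v, a) \<in> E\<^sup>*"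
    using descs_eq_rtrancl[OF asym_if_acyclic[OF assms(1)]] by blast
  then have "(v, u) \<in> E\<^sup>+" using assms(4) by simp
  moreover have "v = u"
    using independent_rtrancl_disjoint[OF asym_if_acyclic] assms(1-3) v(1)
      \<open>(v, u) \<in> E\<^sup>+\<close> by (meson rtrancl.rtrancl_refl trancl_into_rtrancl)
  ultimately show False using assms(1) by (simp add: acyclic_def)
qed

lemma common_pred_notin_descs:
  assumes "acyclic E" "independent Vs E U" "p \<subseteq> U" "p \<noteq> {}" "common_pred E p a"
  shows "a \<notin> descs E U"
proof -
  obtain u where "u \<in> p" using assms(4) by blast
  then show ?thesis
    using assms independent_trancl_notin_descs by (fastforce simp: common_pred_def)
qed

text \<open>A non-root of descs E' V has a parent inside descs E' V, which would pull back to an edge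
  into U.\<close>
lemma dg_iso_descs_roots:
  assumes "acyclic E" "asym E'" "independent Vs E U"
    and iso: "dg_iso E (descs E U) E' (descs E' V) f"
  shows "f ` U \<subseteq> V"
proof
  fix x assume "x \<in> f ` U"
  then obtain u where u: "u \<in> U" "x = f u" by blast
  have asymE: "asym E" using asym_if_acyclic[OF assms(1)] .
  have uD: "u \<in> descs E U" using u by (auto simp: descs_eq_rtrancl[OF asymE])
  show "x \<in> V"
  proof (rule ccontr)
    assume "x \<notin> V"
    moreover have "x \<in> descs E' V" using iso uD u by (auto simp: dg_iso_def bij_betw_def)
    ultimately obtain z' where z': "z' \<in> descs E' V" "(z', x) \<in> E'"
      by (auto simp: descs_eq_rtrancl[OF assms(2)] elim: rtranclE)
    then obtain z where "z \<in> descs E U" "z' = f z"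
      using iso unfolding dg_iso_def bij_betw_def by blast
    moreover from this have "(z, u) \<in> E" using iso uD z' u by (simp add: dg_iso_def)
    ultimately show False
      using independent_trancl_notin_descs[OF assms(1,3) u(1)] by blast
  qed
qed

text \<open>A common descendant of two members of W can be pushed down to a common descendant of their
  disjoint seed sets R x, R y \<subseteq> X.\<close>
lemma independent_if_seeds:
  assumes asym: "asym E" and ind: "independent Vs E X" and "W \<subseteq> Vs"
    and seeds: "\<And>x. x \<in> W \<Longrightarrow>
      R x \<subseteq> X \<and> R x \<noteq> {} \<and> R x \<subseteq> E\<^sup>* `` {x} \<and> E\<^sup>* `` {x} \<subseteq> insert x (E\<^sup>* `` R x)"
    and disj: "\<And>x y. x \<in> W \<Longrightarrow> y \<in> W \<Longrightarrow> x \<noteq> y \<Longrightarrow> R x \<inter> R y = {}"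
  shows "independent Vs E W"
proof -
  have push_down: "E\<^sup>* `` R x \<inter> E\<^sup>* `` S \<noteq> {}"
    if x: "x \<in> W" and "z \<in> E\<^sup>* `` {x}" "z \<in> E\<^sup>* `` S" for x z S
  proof -
    have "z \<in> insert x (E\<^sup>* `` R x)" using seeds[OF x] that(2) by blast
    then show ?thesis
    proof
      assume "z = x"
      obtain r where r: "r \<in> R x" using seeds[OF x] by blast
      then have "(x, r) \<in> E\<^sup>*" using seeds[OF x] by blast
      then have "r \<in> E\<^sup>* `` S" using that(3) \<open>z = x\<close> by (blast intro: rtrancl_trans)
      then show ?thesis using r by blast
    qed (use that(3) in blast)
  qed
  show ?thesis
    unfolding independent_def desc_eq_rtrancl[OF asym]
  proof (intro conjI ballI impI)
    fix x y assume xy: "x \<in> W" "y \<in> W" "x \<noteq> y"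
    show "E\<^sup>* `` {x} \<inter> E\<^sup>* `` {y} = {}"
    proof (rule ccontr)
      assume "E\<^sup>* `` {x} \<inter> E\<^sup>* `` {y} \<noteq> {}"
      then obtain z1 where "z1 \<in> E\<^sup>* `` R x" "z1 \<in> E\<^sup>* `` {y}"
        using push_down[OF xy(1)] by blast
      then obtain z2 where "z2 \<in> E\<^sup>* `` R y" "z2 \<in> E\<^sup>* `` R x"
        using push_down[OF xy(2)] by blast
      then obtain a b where "a \<in> R x" "b \<in> R y" "(a, z2) \<in> E\<^sup>*" "(b, z2) \<in> E\<^sup>*"
        by blast
      moreover from this have "a = b"
        using independent_rtrancl_disjoint[OF asym ind] seeds xy by blast
      ultimately show False using disj[OF xy] by blast
    qed
  qed (use assms(3) in blast)
qed

section \<open>Adjoining common parents\<close>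

lemma rtrancl_Image_eq_insert_children: "E\<^sup>* `` {a} = insert a (E\<^sup>* `` (E `` {a}))"
  by (auto elim: converse_rtranclE intro: converse_rtrancl_into_rtrancl)

lemma descs_adjoin_parents:
  assumes "asym E" and par: "\<forall>j\<in>J. P j \<subseteq> U \<and> E `` {w j} = P j"
  shows "descs E ((U - (\<Union>j\<in>J. P j)) \<union> w ` J) = descs E U \<union> w ` J"
  unfolding descs_eq_rtrancl[OF assms(1)]
proof
  have "E\<^sup>* `` {w j} \<subseteq> E\<^sup>* `` U \<union> w ` J" if "j \<in> J" for j
    using that par rtrancl_Image_eq_insert_children[of E "w j"] by (auto intro: Image_mono)
  then show "E\<^sup>* `` ((U - (\<Union>j\<in>J. P j)) \<union> w ` J) \<subseteq> E\<^sup>* `` U \<union> w ` J"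
    by (auto simp: Image_Un)
next
  have "E\<^sup>* `` {u} \<subseteq> E\<^sup>* `` ((U - (\<Union>j\<in>J. P j)) \<union> w ` J)" if "u \<in> U" for u
  proof (cases "\<exists>j\<in>J. u \<in> P j")
    case True
    then obtain j where "j \<in> J" "(w j, u) \<in> E" using par by blast
    then show ?thesis by (auto intro: converse_rtrancl_into_rtrancl)
  qed (use that in blast)
  then show "E\<^sup>* `` U \<union> w ` J \<subseteq> E\<^sup>* `` ((U - (\<Union>j\<in>J. P j)) \<union> w ` J)"
    by blast
qed

lemma independent_adjoin_parents:
  assumes asym: "asym E" and ind: "independent Vs E (U \<union> I)" and "I \<inter> U = {}"
    and par: "\<forall>j\<in>J. P j \<subseteq> U \<and> P j \<noteq> {} \<and> w j \<in> Vs \<and> E `` {w j} = P j"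
    and disj: "\<forall>j\<in>J. \<forall>j'\<in>J. j \<noteq> j' \<longrightarrow> P j \<inter> P j' = {}"
  shows "independent Vs E ((U - (\<Union>j\<in>J. P j)) \<union> w ` J \<union> I)"
proof (rule independent_if_seeds[OF asym ind,
      where R = "\<lambda>x. if x \<in> w ` J then E `` {x} else {x}"])
  show "(U - (\<Union>j\<in>J. P j)) \<union> w ` J \<union> I \<subseteq> Vs"
    using ind par by (auto simp: independent_def)
next
  fix x assume x: "x \<in> (U - (\<Union>j\<in>J. P j)) \<union> w ` J \<union> I"
  show "(if x \<in> w ` J then E `` {x} else {x}) \<subseteq> U \<union> I
    \<and> (if x \<in> w ` J then E `` {x} else {x}) \<noteq> {}
    \<and> (if x \<in> w ` J then E `` {x} else {x}) \<subseteq> E\<^sup>* `` {x}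
    \<and> E\<^sup>* `` {x} \<subseteq> insert x (E\<^sup>* `` (if x \<in> w ` J then E `` {x} else {x}))"
  proof (cases "x \<in> w ` J")
    case True
    then obtain j where "j \<in> J" "x = w j" by blast
    then have "E `` {x} \<subseteq> U" "E `` {x} \<noteq> {}" using par by auto
    then show ?thesis
      using True rtrancl_Image_eq_insert_children[of E x] by auto
  qed (use x in auto)
next
  have children: "E `` {w j} = P j" "P j \<subseteq> U" if "j \<in> J" for j
    using par that by auto
  fix x y assume x: "x \<in> (U - (\<Union>j\<in>J. P j)) \<union> w ` J \<union> I"
    and y: "y \<in> (U - (\<Union>j\<in>J. P j)) \<union> w ` J \<union> I" and "x \<noteq> y"
  show "(if x \<in> w ` J then E `` {x} else {x}) \<inter> (if y \<in> w ` J then E `` {y} else {y}) = {}"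
  proof (cases "x \<in> w ` J"; cases "y \<in> w ` J")
    assume "x \<in> w ` J" "y \<in> w ` J"
    then obtain j j' where "j \<in> J" "j' \<in> J" "x = w j" "y = w j'" by blast
    moreover from this have "j \<noteq> j'" using \<open>x \<noteq> y\<close> by blast
    ultimately show ?thesis using disj children by auto
  next
    assume "x \<in> w ` J" "y \<notin> w ` J"
    then obtain j where "j \<in> J" "x = w j" by blast
    moreover have "y \<notin> P j"
      using y \<open>y \<notin> w ` J\<close> children \<open>j \<in> J\<close> \<open>I \<inter> U = {}\<close> by blast
    ultimately show ?thesis using \<open>y \<notin> w ` J\<close> children by auto
  next
    assume "x \<notin> w ` J" "y \<in> w ` J"
    then obtain j where "j \<in> J" "y = w j" by blast
    moreover have "x \<notin> P j"
      using x \<open>x \<notin> w ` J\<close> children \<open>j \<in> J\<close> \<open>I \<inter> U = {}\<close> by blast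
    ultimately show ?thesis using \<open>x \<notin> w ` J\<close> children by auto
  qed (use \<open>x \<noteq> y\<close> in auto)
qed

lemma dg_iso_adjoin_parents:
  assumes iso: "dg_iso E D E' D' f"
    and closed: "E `` D \<subseteq> D" "E' `` D' \<subseteq> D'"
    and par: "\<forall>j\<in>J. w j \<notin> D \<and> P j \<subseteq> D \<and> E `` {w j} = P j"
    and par': "\<forall>j\<in>J. w' j \<notin> D' \<and> E' `` {w' j} = f ` P j"
    and inj: "inj_on w' J"
    and F: "\<forall>x\<in>D. F x = f x" "\<forall>j\<in>J. F (w j) = w' j"
  shows "dg_iso E (D \<union> w ` J) E' (D' \<union> w' ` J) F"
proof -
  have f: "inj_on f D" "f ` D = D'"
    "\<And>x y. x \<in> D \<Longrightarrow> y \<in> D \<Longrightarrow> (x, y) \<in> E \<longleftrightarrow> (f x, f y) \<in> E'"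
    using iso by (auto simp: dg_iso_def bij_betw_def)
  have image: "F ` (D \<union> w ` J) = D' \<union> w' ` J"
  proof -
    have "F ` D = D'" using F(1) f(2) by (simp cong: image_cong)
    moreover have "F ` w ` J = w' ` J" using F(2) by (simp add: image_image cong: image_cong)
    ultimately show ?thesis by (simp add: image_Un)
  qed
  have "inj_on F (D \<union> w ` J)"
  proof (rule inj_onI)
    fix x y assume x: "x \<in> D \<union> w ` J" and y: "y \<in> D \<union> w ` J" and "F x = F y"
    consider "x \<in> D" "y \<in> D" | j where "j \<in> J" "x = w j" "y \<in> D"
      | j where "j \<in> J" "x \<in> D" "y = w j" | j j' where "j \<in> J" "j' \<in> J" "x = w j" "y = w j'"
      using x y by blast
    then show "x = y"
    proof cases
      case 1
      then show ?thesis using \<open>F x = F y\<close> F(1) f(1) by (simp add: inj_on_eq_iff)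
    next
      case 2
      then have "F x \<notin> D'" "F y \<in> D'" using F f(2) par' by auto
      then show ?thesis using \<open>F x = F y\<close> by simp
    next
      case 3
      then have "F x \<in> D'" "F y \<notin> D'" using F f(2) par' by auto
      then show ?thesis using \<open>F x = F y\<close> by simp
    next
      case 4
      then show ?thesis using \<open>F x = F y\<close> F(2) inj by (metis inj_on_eq_iff)
    qed
  qed
  moreover have "(x, y) \<in> E \<longleftrightarrow> (F x, F y) \<in> E'"
    if x: "x \<in> D \<union> w ` J" and y: "y \<in> D \<union> w ` J" for x y
  proof -
    consider "x \<in> D" "y \<in> D" | j where "j \<in> J" "x = w j" "y \<in> D"
      | j where "j \<in> J" "x \<in> D" "y = w j" | j j' where "j \<in> J" "j' \<in> J" "x = w j" "y = w j'"
      using x y by blast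
    then show ?thesis
    proof cases
      case 1
      then show ?thesis using F(1) f(3) by simp
    next
      case 2
      then have "(x, y) \<in> E \<longleftrightarrow> f y \<in> f ` P j"
        using par f(1) by (auto simp: inj_on_image_mem_iff)
      also have "\<dots> \<longleftrightarrow> (w' j, f y) \<in> E'"
        using 2 par' by (simp add: Image_singleton_iff[symmetric])
      also have "\<dots> \<longleftrightarrow> (F x, F y) \<in> E'" using 2 F by simp
      finally show ?thesis .
    next
      case 3
      have "F x \<in> D'" "F y \<notin> D'" using 3 F f(2) par' by auto
      then have "(F x, F y) \<notin> E'" using closed(2) by blast
      moreover have "(x, y) \<notin> E" using 3 closed(1) par by blast
      ultimately show ?thesis by simp
    next
      case 4
      have "F y \<notin> D'" "E' `` {F x} \<subseteq> D'" using 4 F(2) par' par f(2) by (auto 4 3)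
      then have "(F x, F y) \<notin> E'" by blast
      moreover have "y \<notin> D" "E `` {x} \<subseteq> D" using 4 par by auto
      then have "(x, y) \<notin> E" by blast
      ultimately show ?thesis by simp
    qed
  qed
  ultimately show ?thesis by (simp add: dg_iso_def bij_betw_def image)
qed

section \<open>Merging along common predecessors\<close>

lemma disjoint_if_T_parents:
  assumes "inj_on f (\<Union>Q)" "\<forall>p\<in>Q. T_edges q `` {b p} = f ` p"
    and "p \<in> Q" "p' \<in> Q" "p \<noteq> p'"
  shows "p \<inter> p' = {}"
proof (rule ccontr)
  assume "p \<inter> p' \<noteq> {}"
  then obtain u where u: "u \<in> p" "u \<in> p'" by blast
  then have "(b p, f u) \<in> T_edges q" "(b p', f u) \<in> T_edges q" using assms(2-4) by blast+
  then have "f ` p = f ` p'" using assms(2-4) T_edges_parent_unique by metis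
  then show False using assms(1,3-5) by (meson Union_upper inj_on_image_eq_iff)
qed

locale common_pred_merge =
  fixes q :: nat and A :: "'a set" and E :: "('a \<times> 'a) set"
    and U U' :: "'a set" and V V' :: "nat list set" and f :: "'a \<Rightarrow> nat list"
    and Q :: "'a set set" and w :: "'a set \<Rightarrow> 'a" and wT :: "'a set \<Rightarrow> nat list"
  assumes q2: "q \<ge> 2"
    and AC: "in_C q A E"
    and indU: "independent A E U"
    and indV: "independent (T_verts q) (T_edges q) V"
    and iso: "dg_iso E (descs E U) (T_edges q) (descs (T_edges q) V) f"
    and Q_def: "Q = {p. p \<subseteq> U \<and> card p = q \<and> (\<exists>a\<in>A. common_pred E p a)
                      \<and> (\<exists>b\<in>T_verts q. common_pred (T_edges q) (f ` p) b)}"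
    and w: "\<forall>p\<in>Q. w p \<in> A \<and> common_pred E p (w p)"
    and wT: "\<forall>p\<in>Q. wT p \<in> T_verts q \<and> common_pred (T_edges q) (f ` p) (wT p)"
    and U'_def: "U' = (U - \<Union>Q) \<union> w ` Q"
    and V'_def: "V' = (V - (\<Union>p\<in>Q. f ` p)) \<union> wT ` Q"
begin

abbreviation "T \<equiv> T_edges q"

lemma acyclic_E: "acyclic E"
  using acyclic_if_in_C[OF AC] .

lemma asym_E: "asym E"
  using asym_if_acyclic[OF acyclic_E] .

lemma asym_T: "asym T"
  using asym_if_acyclic[OF acyclic_T_edges] .

lemma U_subset_descs: "U \<subseteq> descs E U"
  by (auto simp: descs_eq_rtrancl[OF asym_E])

lemma inj_f: "inj_on f (descs E U)"
  using iso by (simp add: dg_iso_def bij_betw_def)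

lemma f_U_subset: "f ` U \<subseteq> V"
  using dg_iso_descs_roots[OF acyclic_E asym_T indU iso] .

lemma Q_children:
  assumes "p \<in> Q"
  shows "p \<subseteq> U" "p \<noteq> {}" "E `` {w p} = p" "T `` {wT p} = f ` p"
proof -
  show pU: "p \<subseteq> U" using assms Q_def by auto
  have card: "card p = q" using assms Q_def by auto
  then show "p \<noteq> {}" using q2 by auto
  show "E `` {w p} = p" using in_C_Image_eq_if_card[OF AC] w assms card by blast
  have "inj_on f p" using inj_f pU U_subset_descs by (blast intro: inj_on_subset)
  then have "card (f ` p) = q" using card by (simp add: card_image)
  then show "T `` {wT p} = f ` p" using T_edges_Image_eq_if_card wT assms by blast
qed

lemma Q_image_subset: "p \<in> Q \<Longrightarrow> f ` p \<subseteq> V"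
  using image_mono[OF Q_children(1), of p f] f_U_subset by (rule order_trans)

lemma Q_disjoint: "\<forall>p\<in>Q. \<forall>p'\<in>Q. p \<noteq> p' \<longrightarrow> p \<inter> p' = {}"
proof -
  have "\<Union>Q \<subseteq> descs E U" using Q_children(1) U_subset_descs by blast
  then have "inj_on f (\<Union>Q)" using inj_f by (rule inj_on_subset[rotated])
  then show ?thesis using disjoint_if_T_parents Q_children(4) by blast
qed

lemma Q_image_disjoint: "\<forall>p\<in>Q. \<forall>p'\<in>Q. p \<noteq> p' \<longrightarrow> f ` p \<inter> f ` p' = {}"
proof (intro ballI impI)
  fix p p' assume "p \<in> Q" "p' \<in> Q" "p \<noteq> p'"
  then have "p \<union> p' \<subseteq> descs E U" using Q_children(1) U_subset_descs by blast
  then have "inj_on f (p \<union> p')" using inj_f by (rule inj_on_subset[rotated])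
  then have "f ` p \<inter> f ` p' = f ` (p \<inter> p')" by (simp add: inj_on_image_Int)
  then show "f ` p \<inter> f ` p' = {}" using Q_disjoint \<open>p \<in> Q\<close> \<open>p' \<in> Q\<close> \<open>p \<noteq> p'\<close> by simp
qed

lemma independent_U'_Un:
  assumes "I \<subseteq> A" "I \<inter> U = {}" "independent A E (U \<union> I)"
  shows "independent A E (U' \<union> I)"
proof -
  have "\<forall>p\<in>Q. p \<subseteq> U \<and> p \<noteq> {} \<and> w p \<in> A \<and> E `` {w p} = p"
    using Q_children w by blast
  from independent_adjoin_parents[OF asym_E assms(3,2) this Q_disjoint]
  show ?thesis by (simp add: U'_def)
qed

lemma independent_U': "independent A E U'"
  using independent_U'_Un[of "{}"] indU by simp

lemma independent_V': "independent (T_verts q) T V'"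
proof -
  have "\<forall>p\<in>Q. f ` p \<subseteq> V \<and> f ` p \<noteq> {} \<and> wT p \<in> T_verts q \<and> T `` {wT p} = f ` p"
  proof (intro ballI conjI)
    fix p assume p: "p \<in> Q"
    show "f ` p \<subseteq> V" using Q_image_subset[OF p] .
    show "f ` p \<noteq> {}" using Q_children(2)[OF p] by simp
    show "wT p \<in> T_verts q" using wT p by blast
    show "T `` {wT p} = f ` p" using Q_children(4)[OF p] .
  qed
  then show ?thesis
    using independent_adjoin_parents[OF asym_T, of "T_verts q" V "{}" Q "\<lambda>p. f ` p" wT]
      indV Q_image_disjoint by (simp add: V'_def)
qed

lemma parents_notin_descs: "p \<in> Q \<Longrightarrow> w p \<notin> descs E U"
  using common_pred_notin_descs[OF acyclic_E indU Q_children(1,2)] w by simp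

lemma T_parents_notin_descs: "p \<in> Q \<Longrightarrow> wT p \<notin> descs T V"
proof -
  assume p: "p \<in> Q"
  then have "f ` p \<subseteq> V" "f ` p \<noteq> {}" using Q_image_subset Q_children(2) by auto
  with common_pred_notin_descs[OF acyclic_T_edges indV] show ?thesis using wT p by simp
qed

lemma descs_U': "descs E U' = descs E U \<union> w ` Q"
proof -
  have "\<forall>p\<in>Q. p \<subseteq> U \<and> E `` {w p} = p" using Q_children(1,3) by blast
  from descs_adjoin_parents[OF asym_E this] show ?thesis by (simp add: U'_def)
qed

lemma descs_V': "descs T V' = descs T V \<union> wT ` Q"
proof -
  have "\<forall>p\<in>Q. f ` p \<subseteq> V \<and> T `` {wT p} = f ` p"
    using Q_image_subset Q_children(4) by blast
  from descs_adjoin_parents[OF asym_T this] show ?thesis by (simp add: V'_def)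
qed

lemma inj_w: "inj_on w Q"
  by (rule inj_onI) (metis Q_children(3))

lemma inj_wT: "inj_on wT Q"
proof (rule inj_onI)
  fix p p' assume "p \<in> Q" "p' \<in> Q" "wT p = wT p'"
  then have "f ` p = f ` p'" using Q_children(4) by metis
  moreover have "p \<subseteq> descs E U" "p' \<subseteq> descs E U"
    using Q_children(1) U_subset_descs \<open>p \<in> Q\<close> \<open>p' \<in> Q\<close> by auto
  ultimately show "p = p'" using inj_f by (simp add: inj_on_image_eq_iff)
qed

lemma extension_exists: "\<exists>F. (\<forall>x\<in>descs E U. F x = f x) \<and> (\<forall>p\<in>Q. F (w p) = wT p)"
proof (intro exI conjI ballI)
  let ?F = "\<lambda>x. if x \<in> descs E U then f x else wT (inv_into Q w x)"
  show "?F x = f x" if "x \<in> descs E U" for x using that by simp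
  show "?F (w p) = wT p" if "p \<in> Q" for p using that parents_notin_descs inj_w by simp
qed

lemma extension_iso:
  assumes "\<forall>x\<in>descs E U. F x = f x" "\<forall>p\<in>Q. F (w p) = wT p"
  shows "dg_iso E (descs E U') T (descs T V') F"
proof -
  have "\<forall>p\<in>Q. w p \<notin> descs E U \<and> p \<subseteq> descs E U \<and> E `` {w p} = p"
    using parents_notin_descs Q_children(1,3) U_subset_descs by blast
  moreover have "\<forall>p\<in>Q. wT p \<notin> descs T V \<and> T `` {wT p} = f ` p"
    using T_parents_notin_descs Q_children(4) by blast
  ultimately show ?thesis
    unfolding descs_U' descs_V'
    using dg_iso_adjoin_parents[OF iso descs_successor_closed[OF asym_E]
        descs_successor_closed[OF asym_T], of Q w "\<lambda>p. p" wT F] inj_wT assms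
    by simp
qed

end

theorem lemma3p2:
  fixes q :: nat and A :: "'a set" and E :: "('a \<times> 'a) set"
    and U U' :: "'a set" and V V' :: "nat list set" and f :: "'a \<Rightarrow> nat list"
    and Q :: "'a set set" and w :: "'a set \<Rightarrow> 'a" and wT :: "'a set \<Rightarrow> nat list"
  assumes q2: "q \<ge> 2"
    and AC: "in_C q A E"
    and indU: "independent A E U"
    and indV: "independent (T_verts q) (T_edges q) V"
    and iso: "dg_iso E (descs E U) (T_edges q) (descs (T_edges q) V) f"
    and Q_def: "Q = {p. p \<subseteq> U \<and> card p = q \<and> (\<exists>a\<in>A. common_pred E p a)
                      \<and> (\<exists>b\<in>T_verts q. common_pred (T_edges q) (f ` p) b)}"
    and w: "\<forall>p\<in>Q. w p \<in> A \<and> common_pred E p (w p)"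
    and wT: "\<forall>p\<in>Q. wT p \<in> T_verts q \<and> common_pred (T_edges q) (f ` p) (wT p)"
    and U'_def: "U' = (U - \<Union>Q) \<union> w ` Q"
    and V'_def: "V' = (V - (\<Union>p\<in>Q. f ` p)) \<union> wT ` Q"
  shows "independent A E U' \<and> independent (T_verts q) (T_edges q) V'
     \<and> (\<exists>F. (\<forall>x\<in>descs E U. F x = f x) \<and> (\<forall>p\<in>Q. F (w p) = wT p))
     \<and> (\<forall>F. (\<forall>x\<in>descs E U. F x = f x) \<and> (\<forall>p\<in>Q. F (w p) = wT p)
            \<longrightarrow> dg_iso E (descs E U') (T_edges q) (descs (T_edges q) V') F)
     \<and> (\<forall>I. I \<subseteq> A \<and> I \<inter> U = {} \<and> independent A E (U \<union> I)
            \<longrightarrow> independent A E (U' \<union> I))"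
proof -
  interpret common_pred_merge q A E U U' V V' f Q w wT
    using assms by unfold_locales
  show ?thesis
    using independent_U' independent_V' extension_exists
    by (intro conjI allI impI) (auto intro: extension_iso independent_U'_Un)
qed

end
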